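(* Let $R$ be a ring, $*\in\{l,r,\emptyset\}$, $S\in\mathbb{L}_*(R,\mathfrak{a})$ and $T\in\mathbb{L}_*(R,\mathfrak{b})$ with $S\subseteq T$. Then $\mathfrak{a}\subseteq\mathfrak{b}$, and for $*\in\{l,\emptyset\}$ the map $S^{-1}R\to T^{-1}R$, $s^{-1}r\mapsto s^{-1}r$ (with $s\in S\subseteq T$) is an $R$-homomorphism with kernel $S^{-1}(\mathfrak{b}/\mathfrak{a})=\overline{S}^{-1}(\mathfrak{b}/\mathfrak{a})$, where $\overline{S}=\{s+\mathfrak{a}:s\in S\}$. The analogous statement (with right fractions $rs^{-1}\mapsto rs^{-1}$) holds for $*=r$.
   Context: Rings are associative with $1$. Multiplicative set: $SS\subseteq S$, $1\in S$, $0\notin S$. $R\langle S^{-1}\rangle=R\langle X_S\rangle/I_S$ ($R\langle X_S\rangle$ freely generated by $R$ and noncommuting $x_s$, $I_S$ generated by $sx_s-1,x_ss-1$); $\mathrm{ass}_R(S)=\ker(R\to R\langle S^{-1}\rangle)$. Left localizable: $R\langle S^{-1}\rangle\ne0$ and every element has the form $s^{-1}r:=(x_s+I_S)(r+I_S)$; right localizable: every element has the form $rs^{-1}:=(r+I_S)(x_s+I_S)$ (and ring nonzero); localizable: both. $\mathbb{L}_*(R,\mathfrak{a})$ is the set of $*$-localizable sets ($*=l$ left, $r$ right, $\emptyset$ two-sided) $S$ with $\mathrm{ass}_R(S)=\mathfrak{a}$. For $*\in\{l,\emptyset\}$, $S^{-1}R$ denotes $R\langle S^{-1}\rangle$; it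 is $R$-isomorphic to the Ore localization $\overline{S}^{-1}(R/\mathfrak{a})$, and $\overline{S}^{-1}(\mathfrak{b}/\mathfrak{a})=\{\overline{s}^{-1}(b+\mathfrak{a}): s\in S,b\in\mathfrak{b}\}$. *)

theory Defs
  imports "HOL-Algebra.Algebra"
begin

text \<open>Letters of the alphabet: Inl r stands for the element r of R,
  Inr s stands for the new noncommuting variable x_s.\<close>

type_synonym 'a word = "('a + 'a) list"
type_synonym 'a fr = "'a word \<Rightarrow> int"

definition fr_delta :: "'a word \<Rightarrow> 'a fr" where
  "fr_delta w = (\<lambda>v. if v = w then 1 else 0)"

definition fr_mult :: "'a fr \<Rightarrow> 'a fr \<Rightarrow> 'a fr" where
  "fr_mult f g = (\<lambda>w. \<Sum>i\<le>length w. f (take i w) * g (drop i w))"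

definition free_ring :: "('a, 'm) ring_scheme \<Rightarrow> 'a set \<Rightarrow> 'a fr ring" where
  "free_ring R S =
    \<lparr>carrier = {f. finite {w. f w \<noteq> 0} \<and>
                   (\<forall>w. f w \<noteq> 0 \<longrightarrow> set w \<subseteq> Inl ` carrier R \<union> Inr ` S)},
     monoid.mult = fr_mult, one = fr_delta [], ring.zero = (\<lambda>w. 0), add = (\<lambda>f g w. f w + g w)\<rparr>"

text \<open>Relations: those making r \<mapsto> r a unital ring homomorphism R \<rightarrow> R<X_S>
  (so that the quotient by them is R<X_S>, freely generated by R and the x_s),
  together with the generators s x_s - 1 and x_s s - 1 of I_S.\<close>
definition loc_rels :: "('a, 'm) ring_scheme \<Rightarrow> 'a set \<Rightarrow> 'a fr set" where
  "loc_rels R S =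
     {(\<lambda>v. fr_delta [Inl (r \<oplus>\<^bsub>R\<^esub> r')] v - fr_delta [Inl r] v - fr_delta [Inl r'] v)
        | r r'. r \<in> carrier R \<and> r' \<in> carrier R}
   \<union> {(\<lambda>v. fr_delta [Inl (r \<otimes>\<^bsub>R\<^esub> r')] v - fr_delta [Inl r, Inl r'] v)
        | r r'. r \<in> carrier R \<and> r' \<in> carrier R}
   \<union> {(\<lambda>v. fr_delta [Inl \<one>\<^bsub>R\<^esub>] v - fr_delta [] v)}
   \<union> {(\<lambda>v. fr_delta [Inl s, Inr s] v - fr_delta [] v) | s. s \<in> S}
   \<union> {(\<lambda>v. fr_delta [Inr s, Inl s] v - fr_delta [] v) | s. s \<in> S}"

definition loc_ideal :: "('a, 'm) ring_scheme \<Rightarrow> 'a set \<Rightarrow> 'a fr set" where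
  "loc_ideal R S = genideal (free_ring R S) (loc_rels R S)"

definition loc_ring :: "('a, 'm) ring_scheme \<Rightarrow> 'a set \<Rightarrow> 'a fr set ring" where
  "loc_ring R S = free_ring R S Quot loc_ideal R S"

definition loc_map :: "('a, 'm) ring_scheme \<Rightarrow> 'a set \<Rightarrow> 'a \<Rightarrow> 'a fr set" where
  "loc_map R S r = loc_ideal R S +>\<^bsub>free_ring R S\<^esub> fr_delta [Inl r]"

definition loc_inv :: "('a, 'm) ring_scheme \<Rightarrow> 'a set \<Rightarrow> 'a \<Rightarrow> 'a fr set" where
  "loc_inv R S s = loc_ideal R S +>\<^bsub>free_ring R S\<^esub> fr_delta [Inr s]"

definition ass :: "('a, 'm) ring_scheme \<Rightarrow> 'a set \<Rightarrow> 'a set" where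
  "ass R S = {r \<in> carrier R. loc_map R S r = \<zero>\<^bsub>loc_ring R S\<^esub>}"

definition multiplicative_set :: "('a, 'm) ring_scheme \<Rightarrow> 'a set \<Rightarrow> bool" where
  "multiplicative_set R S \<longleftrightarrow> S \<subseteq> carrier R \<and> \<one>\<^bsub>R\<^esub> \<in> S \<and> \<zero>\<^bsub>R\<^esub> \<notin> S \<and>
     (\<forall>s\<in>S. \<forall>t\<in>S. s \<otimes>\<^bsub>R\<^esub> t \<in> S)"

definition left_localizable :: "('a, 'm) ring_scheme \<Rightarrow> 'a set \<Rightarrow> bool" where
  "left_localizable R S \<longleftrightarrow> multiplicative_set R S \<and>
     \<one>\<^bsub>loc_ring R S\<^esub> \<noteq> \<zero>\<^bsub>loc_ring R S\<^esub> \<and>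
     (\<forall>q \<in> carrier (loc_ring R S). \<exists>s\<in>S. \<exists>r\<in>carrier R.
        q = loc_inv R S s \<otimes>\<^bsub>loc_ring R S\<^esub> loc_map R S r)"

definition right_localizable :: "('a, 'm) ring_scheme \<Rightarrow> 'a set \<Rightarrow> bool" where
  "right_localizable R S \<longleftrightarrow> multiplicative_set R S \<and>
     \<one>\<^bsub>loc_ring R S\<^esub> \<noteq> \<zero>\<^bsub>loc_ring R S\<^esub> \<and>
     (\<forall>q \<in> carrier (loc_ring R S). \<exists>s\<in>S. \<exists>r\<in>carrier R.
        q = loc_map R S r \<otimes>\<^bsub>loc_ring R S\<^esub> loc_inv R S s)"

datatype loc_kind = LeftLoc | RightLoc | TwoSided

definition kind_localizable :: "loc_kind \<Rightarrow> ('a, 'm) ring_scheme \<Rightarrow> 'a set \<Rightarrow> bool" where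
  "kind_localizable k R S = (case k of
      LeftLoc \<Rightarrow> left_localizable R S
    | RightLoc \<Rightarrow> right_localizable R S
    | TwoSided \<Rightarrow> left_localizable R S \<and> right_localizable R S)"

definition Lset :: "loc_kind \<Rightarrow> ('a, 'm) ring_scheme \<Rightarrow> 'a set \<Rightarrow> 'a set set" where
  "Lset k R \<aa> = {S. kind_localizable k R S \<and> ass R S = \<aa>}"

end

theory Submission
  imports Defs
begin

(* Since S is contained in T, every defining relation of R<S^-1> is also one of R<T^-1>, so the
   quotient map of the free ring R<X_T> restricted to R<X_S> kills I_S and descends to a ring
   homomorphism R<S^-1> -> R<T^-1> fixing every r and every s^-1; in particular ass(S) is
   contained in ass(T). If S is left localizable, every element of S^-1 R is a fraction s^-1 r,
   whose image s^-1 r in T^-1 R vanishes iff r does, because s is a unit there; hence the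
   kernel consists of the fractions s^-1 b with b in ass(T). Right fractions are symmetric. *)

lemma fr_mult_assoc: "fr_mult (fr_mult f g) h = fr_mult f (fr_mult g h)"
proof (rule ext)
  fix w :: "'a word"
  define n where "n = length w"
  have "fr_mult (fr_mult f g) h w =
     (\<Sum>i\<le>n. \<Sum>j\<le>i. f (take j w) * g (drop j (take i w)) * h (drop i w))"
    unfolding fr_mult_def n_def
    by (rule sum.cong) (auto simp: sum_distrib_right min_def intro!: sum.cong)
  also have "\<dots> = (\<Sum>i\<le>n. \<Sum>j\<in>{j\<in>{..n}. j \<le> i}.
      f (take j w) * g (drop j (take i w)) * h (drop i w))"
    by (rule sum.cong) (auto intro!: sum.cong)
  also have "\<dots> = (\<Sum>j\<le>n. \<Sum>i\<in>{i\<in>{..n}. j \<le> i}.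
      f (take j w) * g (drop j (take i w)) * h (drop i w))"
    by (rule sum.swap_restrict) auto
  also have "\<dots> = (\<Sum>j\<le>n. \<Sum>k\<le>n-j. f (take j w) * g (drop j (take (j+k) w)) * h (drop (j+k) w))"
  proof (rule sum.cong[OF refl])
    fix j assume j: "j \<in> {..n}"
    have "(\<lambda>k. j + k) ` {..n-j} = {i\<in>{..n}. j \<le> i}"
      using j by (auto simp: image_iff) (metis add_diff_inverse_nat atMost_iff diff_le_mono not_less)
    then show "(\<Sum>i\<in>{i\<in>{..n}. j \<le> i}. f (take j w) * g (drop j (take i w)) * h (drop i w)) =
          (\<Sum>k\<le>n-j. f (take j w) * g (drop j (take (j+k) w)) * h (drop (j+k) w))"
      by (metis (no_types, lifting) add_left_imp_eq inj_onI sum.reindex_cong)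
  qed
  also have "\<dots> = fr_mult f (fr_mult g h) w"
    unfolding fr_mult_def n_def
    by (rule sum.cong) (auto simp: sum_distrib_left take_drop add.commute mult.assoc intro!: sum.cong)
  finally show "fr_mult (fr_mult f g) h w = fr_mult f (fr_mult g h) w" .
qed

lemma fr_mult_one_left: "fr_mult (fr_delta []) f = f"
proof (rule ext)
  fix w :: "'a word"
  have "fr_mult (fr_delta []) f w = (\<Sum>i\<le>length w. if i = 0 then f w else 0)"
    unfolding fr_mult_def fr_delta_def by (rule sum.cong) auto
  then show "fr_mult (fr_delta []) f w = f w" by simp
qed

lemma fr_mult_one_right: "fr_mult f (fr_delta []) = f"
proof (rule ext)
  fix w :: "'a word"
  have "fr_mult f (fr_delta []) w = (\<Sum>i\<le>length w. if i = length w then f w else 0)"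
    unfolding fr_mult_def fr_delta_def by (rule sum.cong) auto
  then show "fr_mult f (fr_delta []) w = f w" by simp
qed

lemma fr_mult_delta: "fr_mult (fr_delta u) (fr_delta v) = fr_delta (u @ v)"
proof (rule ext)
  fix w :: "'a word"
  have "fr_mult (fr_delta u) (fr_delta v) w =
      (\<Sum>i\<le>length w. if i = length u \<and> w = u @ v then 1 else 0)"
    unfolding fr_mult_def fr_delta_def by (rule sum.cong) (auto simp: min_def)
  also have "\<dots> = fr_delta (u @ v) w"
    by (auto simp: fr_delta_def)
  finally show "fr_mult (fr_delta u) (fr_delta v) w = fr_delta (u @ v) w" .
qed

lemma fr_mult_distrib_left: "fr_mult f (\<lambda>w. g w + h w) = (\<lambda>w. fr_mult f g w + fr_mult f h w)"
  unfolding fr_mult_def by (auto simp: distrib_left sum.distrib)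

lemma fr_mult_distrib_right: "fr_mult (\<lambda>w. g w + h w) f = (\<lambda>w. fr_mult g f w + fr_mult h f w)"
  unfolding fr_mult_def by (auto simp: distrib_right sum.distrib)

lemma fr_mult_nonzero_split: "fr_mult f g w \<noteq> 0 \<Longrightarrow> \<exists>i. f (take i w) \<noteq> 0 \<and> g (drop i w) \<noteq> 0"
  unfolding fr_mult_def by (metis (no_types, lifting) mult_eq_0_iff sum.neutral)

lemma free_ring_simps:
  "carrier (free_ring R S) = {f. finite {w. f w \<noteq> 0} \<and>
                   (\<forall>w. f w \<noteq> 0 \<longrightarrow> set w \<subseteq> Inl ` carrier R \<union> Inr ` S)}"
  "monoid.mult (free_ring R S) = fr_mult" "one (free_ring R S) = fr_delta []"
  "ring.zero (free_ring R S) = (\<lambda>w. 0)" "add (free_ring R S) = (\<lambda>f g w. f w + g w)"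
  by (simp_all add: free_ring_def)

lemma free_ring_carrierI:
  assumes "\<And>v. f v \<noteq> 0 \<Longrightarrow> v \<in> W" "finite W"
    and "\<And>v. v \<in> W \<Longrightarrow> set v \<subseteq> Inl ` carrier R \<union> Inr ` S"
  shows "f \<in> carrier (free_ring R S)"
  unfolding free_ring_simps using assms finite_subset[of "{w. f w \<noteq> 0}" W] by auto

lemma fr_mult_closed:
  assumes "f \<in> carrier (free_ring R S)" "g \<in> carrier (free_ring R S)"
  shows "fr_mult f g \<in> carrier (free_ring R S)"
proof (rule free_ring_carrierI)
  let ?W = "(\<lambda>(u, v). u @ v) ` ({u. f u \<noteq> 0} \<times> {v. g v \<noteq> 0})"
  show "w \<in> ?W" if nz: "fr_mult f g w \<noteq> 0" for w
  proof -
    obtain i where "f (take i w) \<noteq> 0" "g (drop i w) \<noteq> 0"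
      using fr_mult_nonzero_split[OF nz] by blast
    then show ?thesis by (simp add: image_iff) (metis append_take_drop_id)
  qed
  show "finite ?W"
    using assms by (intro finite_imageI finite_cartesian_product) (simp_all add: free_ring_simps)
  show "set w \<subseteq> Inl ` carrier R \<union> Inr ` S" if "w \<in> ?W" for w
  proof -
    from that obtain u v where "w = u @ v" "f u \<noteq> 0" "g v \<noteq> 0" by auto
    with assms show ?thesis by (simp add: free_ring_simps)
  qed
qed

lemma fr_delta_carrier:
  "set v \<subseteq> Inl ` carrier R \<union> Inr ` S \<Longrightarrow> fr_delta v \<in> carrier (free_ring R S)"
  by (rule free_ring_carrierI[where W = "{v}"]) (auto simp: fr_delta_def split: if_splits)

lemma ring_free_ring: "ring (free_ring R S)"
proof (rule ringI)
  show "abelian_group (free_ring R S)"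
  proof (rule abelian_groupI)
    fix f g assume "f \<in> carrier (free_ring R S)" "g \<in> carrier (free_ring R S)"
    then show "f \<oplus>\<^bsub>free_ring R S\<^esub> g \<in> carrier (free_ring R S)"
      by (intro free_ring_carrierI[where W = "{w. f w \<noteq> 0} \<union> {w. g w \<noteq> 0}"])
        (auto simp: free_ring_simps)
  next
    fix f assume "f \<in> carrier (free_ring R S)"
    then show "\<exists>g\<in>carrier (free_ring R S). g \<oplus>\<^bsub>free_ring R S\<^esub> f = \<zero>\<^bsub>free_ring R S\<^esub>"
      by (intro bexI[of _ "\<lambda>w. - f w"]) (auto simp: free_ring_simps)
  qed (auto simp: free_ring_simps)
  show "monoid (free_ring R S)"
    by (rule monoidI)
      (auto simp: free_ring_simps(2,3) fr_delta_carrier fr_mult_closed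
         fr_mult_assoc fr_mult_one_left fr_mult_one_right)
qed (auto simp: free_ring_simps fr_mult_distrib_left fr_mult_distrib_right)

lemma free_ring_minus:
  assumes "g \<in> carrier (free_ring R S)"
  shows "f \<ominus>\<^bsub>free_ring R S\<^esub> g = (\<lambda>w. f w - g w)"
proof -
  interpret F: ring "free_ring R S" by (rule ring_free_ring)
  have "(\<lambda>w. - g w) \<in> carrier (free_ring R S)" using assms by (auto simp: free_ring_simps)
  then have "\<ominus>\<^bsub>free_ring R S\<^esub> g = (\<lambda>w. - g w)"
    by (intro F.minus_equality assms) (auto simp: free_ring_simps)
  then show ?thesis by (simp add: a_minus_def free_ring_simps)
qed

abbreviation loc_class :: "('a, 'm) ring_scheme \<Rightarrow> 'a set \<Rightarrow> 'a fr \<Rightarrow> 'a fr set" where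
  "loc_class R S f \<equiv> loc_ideal R S +>\<^bsub>free_ring R S\<^esub> f"

lemma loc_ring_zero: "\<zero>\<^bsub>loc_ring R S\<^esub> = loc_ideal R S"
  unfolding loc_ring_def FactRing_def by simp

lemma loc_rels_carrier:
  assumes "ring R" "S \<subseteq> carrier R"
  shows "loc_rels R S \<subseteq> carrier (free_ring R S)"
proof -
  interpret R: ring R by fact
  interpret F: ring "free_ring R S" by (rule ring_free_ring)
  have minus: "(\<lambda>v. f v - g v) = f \<ominus>\<^bsub>free_ring R S\<^esub> g" if "g \<in> carrier (free_ring R S)" for f g
    using that by (simp add: free_ring_minus)
  show ?thesis
    unfolding loc_rels_def using assms(2)
    by (auto simp: minus fr_delta_carrier subset_iff intro!: F.minus_closed)
qed

lemma loc_ideal_is_ideal: "ring R \<Longrightarrow> S \<subseteq> carrier R \<Longrightarrow> ideal (loc_ideal R S) (free_ring R S)"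
  unfolding loc_ideal_def by (rule ring.genideal_ideal[OF ring_free_ring loc_rels_carrier])

lemma loc_rels_subset_loc_ideal: "ring R \<Longrightarrow> S \<subseteq> carrier R \<Longrightarrow> loc_rels R S \<subseteq> loc_ideal R S"
  unfolding loc_ideal_def by (rule ring.genideal_self[OF ring_free_ring loc_rels_carrier])

lemma ring_loc_ring: "ring R \<Longrightarrow> S \<subseteq> carrier R \<Longrightarrow> ring (loc_ring R S)"
  unfolding loc_ring_def by (rule ideal.quotient_is_ring[OF loc_ideal_is_ideal])

lemma loc_class_ring_hom:
  "ring R \<Longrightarrow> S \<subseteq> carrier R \<Longrightarrow> loc_class R S \<in> ring_hom (free_ring R S) (loc_ring R S)"
  unfolding loc_ring_def by (rule ideal.rcos_ring_hom[OF loc_ideal_is_ideal])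

lemma loc_map_closed:
  "ring R \<Longrightarrow> S \<subseteq> carrier R \<Longrightarrow> r \<in> carrier R \<Longrightarrow> loc_map R S r \<in> carrier (loc_ring R S)"
  unfolding loc_map_def by (rule ring_hom_closed[OF loc_class_ring_hom]) (auto intro: fr_delta_carrier)

lemma loc_inv_closed:
  "ring R \<Longrightarrow> S \<subseteq> carrier R \<Longrightarrow> s \<in> S \<Longrightarrow> loc_inv R S s \<in> carrier (loc_ring R S)"
  unfolding loc_inv_def by (rule ring_hom_closed[OF loc_class_ring_hom]) (auto intro: fr_delta_carrier)

lemma loc_class_eq_one:
  assumes "ring R" "S \<subseteq> carrier R" "(\<lambda>v. fr_delta u v - fr_delta [] v) \<in> loc_rels R S"
    and "set u \<subseteq> Inl ` carrier R \<union> Inr ` S"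
  shows "loc_class R S (fr_delta u) = \<one>\<^bsub>loc_ring R S\<^esub>"
proof -
  interpret F: ring "free_ring R S" by (rule ring_free_ring)
  have one: "fr_delta [] \<in> carrier (free_ring R S)" by (rule fr_delta_carrier) simp
  have "fr_delta u \<ominus>\<^bsub>free_ring R S\<^esub> fr_delta [] \<in> loc_ideal R S"
    using assms(3) loc_rels_subset_loc_ideal[OF assms(1,2)] by (auto simp: free_ring_minus[OF one])
  then have "loc_class R S (fr_delta u) = loc_class R S (fr_delta [])"
    using F.quotient_eq_iff_same_a_r_cos[OF loc_ideal_is_ideal[OF assms(1,2)]
        fr_delta_carrier[OF assms(4)] one] by simp
  also have "\<dots> = \<one>\<^bsub>loc_ring R S\<^esub>"
    using ring_hom_one[OF loc_class_ring_hom[OF assms(1,2)]] by (simp add: free_ring_simps)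
  finally show ?thesis .
qed

lemma loc_map_mult_loc_inv:
  assumes "ring R" "S \<subseteq> carrier R" "s \<in> S"
  shows "loc_map R S s \<otimes>\<^bsub>loc_ring R S\<^esub> loc_inv R S s = \<one>\<^bsub>loc_ring R S\<^esub>"
proof -
  have letters: "fr_delta [Inl s] \<in> carrier (free_ring R S)" "fr_delta [Inr s] \<in> carrier (free_ring R S)"
    using assms by (auto intro!: fr_delta_carrier)
  have "loc_map R S s \<otimes>\<^bsub>loc_ring R S\<^esub> loc_inv R S s = loc_class R S (fr_delta [Inl s, Inr s])"
    unfolding loc_map_def loc_inv_def
    using ring_hom_mult[OF loc_class_ring_hom[OF assms(1,2)] letters(1,2)]
    by (simp add: free_ring_simps fr_mult_delta)
  also have "\<dots> = \<one>\<^bsub>loc_ring R S\<^esub>"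
    using assms by (intro loc_class_eq_one) (auto simp: loc_rels_def)
  finally show ?thesis .
qed

lemma loc_inv_mult_loc_map:
  assumes "ring R" "S \<subseteq> carrier R" "s \<in> S"
  shows "loc_inv R S s \<otimes>\<^bsub>loc_ring R S\<^esub> loc_map R S s = \<one>\<^bsub>loc_ring R S\<^esub>"
proof -
  have letters: "fr_delta [Inl s] \<in> carrier (free_ring R S)" "fr_delta [Inr s] \<in> carrier (free_ring R S)"
    using assms by (auto intro!: fr_delta_carrier)
  have "loc_inv R S s \<otimes>\<^bsub>loc_ring R S\<^esub> loc_map R S s = loc_class R S (fr_delta [Inr s, Inl s])"
    unfolding loc_map_def loc_inv_def
    using ring_hom_mult[OF loc_class_ring_hom[OF assms(1,2)] letters(2,1)]
    by (simp add: free_ring_simps fr_mult_delta)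
  also have "\<dots> = \<one>\<^bsub>loc_ring R S\<^esub>"
    using assms by (intro loc_class_eq_one) (auto simp: loc_rels_def)
  finally show ?thesis .
qed

lemma loc_inv_mult_loc_map_eq_zero_iff:
  assumes "ring R" "S \<subseteq> carrier R" "s \<in> S" "r \<in> carrier R"
  shows "loc_inv R S s \<otimes>\<^bsub>loc_ring R S\<^esub> loc_map R S r = \<zero>\<^bsub>loc_ring R S\<^esub> \<longleftrightarrow> r \<in> ass R S"
proof -
  interpret L: ring "loc_ring R S" by (rule ring_loc_ring[OF assms(1,2)])
  have s: "loc_map R S s \<in> carrier (loc_ring R S)" "loc_inv R S s \<in> carrier (loc_ring R S)"
    using assms by (auto intro: loc_map_closed loc_inv_closed)
  have r: "loc_map R S r \<in> carrier (loc_ring R S)" using assms by (intro loc_map_closed)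
  have "loc_map R S r
      = loc_map R S s \<otimes>\<^bsub>loc_ring R S\<^esub> (loc_inv R S s \<otimes>\<^bsub>loc_ring R S\<^esub> loc_map R S r)"
    using s r loc_map_mult_loc_inv[OF assms(1-3)] by (simp add: L.m_assoc[symmetric])
  then show ?thesis using s r assms(4) by (auto simp: ass_def)
qed

lemma loc_map_mult_loc_inv_eq_zero_iff:
  assumes "ring R" "S \<subseteq> carrier R" "s \<in> S" "r \<in> carrier R"
  shows "loc_map R S r \<otimes>\<^bsub>loc_ring R S\<^esub> loc_inv R S s = \<zero>\<^bsub>loc_ring R S\<^esub> \<longleftrightarrow> r \<in> ass R S"
proof -
  interpret L: ring "loc_ring R S" by (rule ring_loc_ring[OF assms(1,2)])
  have s: "loc_map R S s \<in> carrier (loc_ring R S)" "loc_inv R S s \<in> carrier (loc_ring R S)"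
    using assms by (auto intro: loc_map_closed loc_inv_closed)
  have r: "loc_map R S r \<in> carrier (loc_ring R S)" using assms by (intro loc_map_closed)
  have "loc_map R S r
      = (loc_map R S r \<otimes>\<^bsub>loc_ring R S\<^esub> loc_inv R S s) \<otimes>\<^bsub>loc_ring R S\<^esub> loc_map R S s"
    using s r loc_inv_mult_loc_map[OF assms(1-3)] by (simp add: L.m_assoc)
  then show ?thesis using s r assms(4) by (auto simp: ass_def)
qed

(* For I inside the kernel of h, h is constant on every coset I +> x, and the_elem reads off that
   value; on other sets the_elem is unspecified. *)
definition quot_lift :: "('a \<Rightarrow> 'b) \<Rightarrow> 'a set \<Rightarrow> 'b" where
  "quot_lift h C = the_elem (h ` C)"

lemma (in ring_hom_ring) quot_lift_rcos:
  assumes "ideal I R" "I \<subseteq> a_kernel R S h" "x \<in> carrier R"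
  shows "quot_lift h (I +> x) = h x"
proof -
  interpret I: ideal I R by fact
  have "I +> x \<subseteq> a_kernel R S h +> x"
    using assms(2) by (auto simp: a_r_coset_def')
  then have "h ` (I +> x) \<subseteq> {h x}"
    using rcos_imp_homeq[OF assms(3)] by blast
  moreover have "x \<in> I +> x" by (rule I.a_rcos_self[OF assms(3)])
  ultimately have "h ` (I +> x) = {h x}" by blast
  then show ?thesis by (simp add: quot_lift_def)
qed

lemma (in ring_hom_ring) quot_lift_hom:
  assumes "ideal I R" "I \<subseteq> a_kernel R S h"
  shows "quot_lift h \<in> ring_hom (R Quot I) S"
proof -
  interpret I: ideal I R by fact
  have carrier_Quot: "carrier (R Quot I) = (+>) I ` carrier R"
    by (auto simp: FactRing_def A_RCOSETS_def')
  note lift = quot_lift_rcos[OF assms]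
  note quot_hom = I.rcos_ring_hom
  show ?thesis
  proof (rule ring_hom_memI)
    show "quot_lift h A \<in> carrier S" if "A \<in> carrier (R Quot I)" for A
      using that by (auto simp: carrier_Quot lift)
    show "quot_lift h \<one>\<^bsub>R Quot I\<^esub> = \<one>\<^bsub>S\<^esub>"
      using lift[of \<one>] ring_hom_one[OF quot_hom] by simp
    fix A B assume "A \<in> carrier (R Quot I)" "B \<in> carrier (R Quot I)"
    then obtain x y where xy: "x \<in> carrier R" "A = I +> x" "y \<in> carrier R" "B = I +> y"
      unfolding carrier_Quot by blast
    show "quot_lift h (A \<otimes>\<^bsub>R Quot I\<^esub> B) = quot_lift h A \<otimes>\<^bsub>S\<^esub> quot_lift h B"
      using xy by (simp add: ring_hom_mult[OF quot_hom, symmetric] lift)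
    show "quot_lift h (A \<oplus>\<^bsub>R Quot I\<^esub> B) = quot_lift h A \<oplus>\<^bsub>S\<^esub> quot_lift h B"
      using xy by (simp add: ring_hom_add[OF quot_hom, symmetric] lift)
  qed
qed

lemma free_ring_restrict:
  "S \<subseteq> T \<Longrightarrow> free_ring R S = (free_ring R T)\<lparr>carrier := carrier (free_ring R S)\<rparr>"
  by (simp add: free_ring_def)

lemma subring_free_ring:
  assumes "S \<subseteq> T"
  shows "subring (carrier (free_ring R S)) (free_ring R T)"
proof (rule ring.ring_incl_imp_subring[OF ring_free_ring])
  show "carrier (free_ring R S) \<subseteq> carrier (free_ring R T)"
    using assms unfolding free_ring_simps by blast
  show "ring ((free_ring R T)\<lparr>carrier := carrier (free_ring R S)\<rparr>)"
    using ring_free_ring[of R S] by (simp flip: free_ring_restrict[OF assms])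
qed

lemma loc_class_restrict_hom_ring:
  assumes "ring R" "T \<subseteq> carrier R" "S \<subseteq> T"
  shows "ring_hom_ring (free_ring R S) (loc_ring R T) (loc_class R T)"
proof -
  have "ring_hom_ring (free_ring R T) (loc_ring R T) (loc_class R T)"
    unfolding loc_ring_def by (rule ideal.rcos_ring_hom_ring[OF loc_ideal_is_ideal[OF assms(1,2)]])
  from ring_hom_ring.induced_ring_hom[OF this subring_free_ring[OF assms(3)]]
  show ?thesis by (simp only: free_ring_restrict[OF assms(3), symmetric])
qed

lemma loc_rels_mono: "S \<subseteq> T \<Longrightarrow> loc_rels R S \<subseteq> loc_rels R T"
  unfolding loc_rels_def by (intro Un_mono subset_refl) auto

lemma loc_ideal_subset_kernel:
  assumes "ring R" "T \<subseteq> carrier R" "S \<subseteq> T"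
  shows "loc_ideal R S \<subseteq> a_kernel (free_ring R S) (loc_ring R T) (loc_class R T)"
proof -
  interpret h: ring_hom_ring "free_ring R S" "loc_ring R T" "loc_class R T"
    by (rule loc_class_restrict_hom_ring[OF assms])
  interpret I: ideal "loc_ideal R T" "free_ring R T" by (rule loc_ideal_is_ideal[OF assms(1,2)])
  have "loc_rels R S \<subseteq> loc_ideal R T \<inter> carrier (free_ring R S)"
    by (intro Int_greatest
        order_trans[OF loc_rels_mono[OF assms(3)] loc_rels_subset_loc_ideal[OF assms(1,2)]]
        loc_rels_carrier[OF assms(1) order_trans[OF assms(3,2)]])
  also have "\<dots> \<subseteq> a_kernel (free_ring R S) (loc_ring R T) (loc_class R T)"
  proof
    fix f assume f: "f \<in> loc_ideal R T \<inter> carrier (free_ring R S)"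
    then have "loc_class R T f = \<zero>\<^bsub>loc_ring R T\<^esub>"
      unfolding loc_ring_zero by (intro I.a_rcos_const) blast
    with f show "f \<in> a_kernel (free_ring R S) (loc_ring R T) (loc_class R T)"
      unfolding a_kernel_def' by blast
  qed
  finally show ?thesis
    unfolding loc_ideal_def[of R S] by (rule h.R.genideal_minimal[OF h.kernel_is_ideal])
qed

abbreviation loc_lift :: "('a, 'm) ring_scheme \<Rightarrow> 'a set \<Rightarrow> 'a fr set \<Rightarrow> 'a fr set" where
  "loc_lift R T \<equiv> quot_lift (loc_class R T)"

lemma loc_lift_hom:
  assumes "ring R" "T \<subseteq> carrier R" "S \<subseteq> T"
  shows "loc_lift R T \<in> ring_hom (loc_ring R S) (loc_ring R T)"
  unfolding loc_ring_def[of R S]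
  by (rule ring_hom_ring.quot_lift_hom[OF loc_class_restrict_hom_ring[OF assms]
        loc_ideal_is_ideal[OF assms(1) order_trans[OF assms(3,2)]] loc_ideal_subset_kernel[OF assms]])

lemma loc_lift_class:
  assumes "ring R" "T \<subseteq> carrier R" "S \<subseteq> T" "f \<in> carrier (free_ring R S)"
  shows "loc_lift R T (loc_class R S f) = loc_class R T f"
  by (rule ring_hom_ring.quot_lift_rcos[OF loc_class_restrict_hom_ring[OF assms(1-3)]
        loc_ideal_is_ideal[OF assms(1) order_trans[OF assms(3,2)]] loc_ideal_subset_kernel[OF assms(1-3)]
        assms(4)])

lemma loc_lift_loc_map:
  assumes "ring R" "T \<subseteq> carrier R" "S \<subseteq> T" "r \<in> carrier R"
  shows "loc_lift R T (loc_map R S r) = loc_map R T r"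
  unfolding loc_map_def using assms(4) by (intro loc_lift_class[OF assms(1-3)] fr_delta_carrier) auto

lemma loc_lift_loc_inv:
  assumes "ring R" "T \<subseteq> carrier R" "S \<subseteq> T" "s \<in> S"
  shows "loc_lift R T (loc_inv R S s) = loc_inv R T s"
  unfolding loc_inv_def using assms(4) by (intro loc_lift_class[OF assms(1-3)] fr_delta_carrier) auto

lemma loc_lift_left_fraction:
  assumes "ring R" "T \<subseteq> carrier R" "S \<subseteq> T" "s \<in> S" "r \<in> carrier R"
  shows "loc_lift R T (loc_inv R S s \<otimes>\<^bsub>loc_ring R S\<^esub> loc_map R S r)
    = loc_inv R T s \<otimes>\<^bsub>loc_ring R T\<^esub> loc_map R T r"
  using assms order_trans[OF assms(3,2)]
  by (simp add: ring_hom_mult[OF loc_lift_hom[OF assms(1-3)]] loc_inv_closed loc_map_closed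
      loc_lift_loc_map loc_lift_loc_inv)

lemma loc_lift_right_fraction:
  assumes "ring R" "T \<subseteq> carrier R" "S \<subseteq> T" "s \<in> S" "r \<in> carrier R"
  shows "loc_lift R T (loc_map R S r \<otimes>\<^bsub>loc_ring R S\<^esub> loc_inv R S s)
    = loc_map R T r \<otimes>\<^bsub>loc_ring R T\<^esub> loc_inv R T s"
  using assms order_trans[OF assms(3,2)]
  by (simp add: ring_hom_mult[OF loc_lift_hom[OF assms(1-3)]] loc_inv_closed loc_map_closed
      loc_lift_loc_map loc_lift_loc_inv)

lemma ass_mono:
  assumes "ring R" "T \<subseteq> carrier R" "S \<subseteq> T"
  shows "ass R S \<subseteq> ass R T"
proof
  fix r assume "r \<in> ass R S"
  then have r: "r \<in> carrier R" "loc_map R S r = \<zero>\<^bsub>loc_ring R S\<^esub>" by (auto simp: ass_def)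
  have "loc_map R T r = loc_lift R T \<zero>\<^bsub>loc_ring R S\<^esub>"
    using loc_lift_loc_map[OF assms r(1)] r(2) by simp
  also have "\<dots> = \<zero>\<^bsub>loc_ring R T\<^esub>"
    using assms order_trans[OF assms(3,2)] by (intro ring_hom_zero[OF loc_lift_hom] ring_loc_ring)
  finally show "r \<in> ass R T" using r(1) by (simp add: ass_def)
qed

lemma loc_lift_kernel_left:
  assumes "ring R" "T \<subseteq> carrier R" "S \<subseteq> T" "left_localizable R S"
  shows "a_kernel (loc_ring R S) (loc_ring R T) (loc_lift R T)
    = {loc_inv R S s \<otimes>\<^bsub>loc_ring R S\<^esub> loc_map R S b | s b. s \<in> S \<and> b \<in> ass R T}"
    (is "_ = ?fractions")
proof (intro equalityI subsetI)
  fix q assume "q \<in> a_kernel (loc_ring R S) (loc_ring R T) (loc_lift R T)"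
  then have q: "q \<in> carrier (loc_ring R S)" "loc_lift R T q = \<zero>\<^bsub>loc_ring R T\<^esub>"
    by (simp_all add: a_kernel_def')
  then obtain s r where sr: "s \<in> S" "r \<in> carrier R"
      "q = loc_inv R S s \<otimes>\<^bsub>loc_ring R S\<^esub> loc_map R S r"
    using assms(4) unfolding left_localizable_def by blast
  have "r \<in> ass R T"
    using q(2) sr assms(3) loc_inv_mult_loc_map_eq_zero_iff[OF assms(1,2)]
    by (auto simp: loc_lift_left_fraction[OF assms(1-3)])
  with sr show "q \<in> ?fractions" by blast
next
  fix q assume "q \<in> ?fractions"
  then obtain s b where sb: "s \<in> S" "b \<in> ass R T"
      "q = loc_inv R S s \<otimes>\<^bsub>loc_ring R S\<^esub> loc_map R S b"
    by blast
  have b: "b \<in> carrier R" using sb(2) by (simp add: ass_def)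
  have "q \<in> carrier (loc_ring R S)"
    using sb(1,3) b assms(1-3) order_trans[OF assms(3,2)]
    by (simp add: ring.ring_simprules(5) ring_loc_ring loc_inv_closed loc_map_closed)
  moreover have "loc_lift R T q = \<zero>\<^bsub>loc_ring R T\<^esub>"
    using sb b assms(3) loc_inv_mult_loc_map_eq_zero_iff[OF assms(1,2)]
    by (auto simp: loc_lift_left_fraction[OF assms(1-3)])
  ultimately show "q \<in> a_kernel (loc_ring R S) (loc_ring R T) (loc_lift R T)"
    by (simp add: a_kernel_def')
qed

lemma loc_lift_kernel_right:
  assumes "ring R" "T \<subseteq> carrier R" "S \<subseteq> T" "right_localizable R S"
  shows "a_kernel (loc_ring R S) (loc_ring R T) (loc_lift R T)
    = {loc_map R S b \<otimes>\<^bsub>loc_ring R S\<^esub> loc_inv R S s | s b. s \<in> S \<and> b \<in> ass R T}"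
    (is "_ = ?fractions")
proof (intro equalityI subsetI)
  fix q assume "q \<in> a_kernel (loc_ring R S) (loc_ring R T) (loc_lift R T)"
  then have q: "q \<in> carrier (loc_ring R S)" "loc_lift R T q = \<zero>\<^bsub>loc_ring R T\<^esub>"
    by (simp_all add: a_kernel_def')
  then obtain s r where sr: "s \<in> S" "r \<in> carrier R"
      "q = loc_map R S r \<otimes>\<^bsub>loc_ring R S\<^esub> loc_inv R S s"
    using assms(4) unfolding right_localizable_def by blast
  have "r \<in> ass R T"
    using q(2) sr assms(3) loc_map_mult_loc_inv_eq_zero_iff[OF assms(1,2)]
    by (auto simp: loc_lift_right_fraction[OF assms(1-3)])
  with sr show "q \<in> ?fractions" by blast
next
  fix q assume "q \<in> ?fractions"
  then obtain s b where sb: "s \<in> S" "b \<in> ass R T"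
      "q = loc_map R S b \<otimes>\<^bsub>loc_ring R S\<^esub> loc_inv R S s"
    by blast
  have b: "b \<in> carrier R" using sb(2) by (simp add: ass_def)
  have "q \<in> carrier (loc_ring R S)"
    using sb(1,3) b assms(1-3) order_trans[OF assms(3,2)]
    by (simp add: ring.ring_simprules(5) ring_loc_ring loc_inv_closed loc_map_closed)
  moreover have "loc_lift R T q = \<zero>\<^bsub>loc_ring R T\<^esub>"
    using sb b assms(3) loc_map_mult_loc_inv_eq_zero_iff[OF assms(1,2)]
    by (auto simp: loc_lift_right_fraction[OF assms(1-3)])
  ultimately show "q \<in> a_kernel (loc_ring R S) (loc_ring R T) (loc_lift R T)"
    by (simp add: a_kernel_def')
qed

theorem lemma1p10:
  fixes R :: "('a, 'm) ring_scheme" and k :: loc_kind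
    and S T \<aa> \<bb> :: "'a set"
  assumes "ring R"
    and "S \<in> Lset k R \<aa>" and "T \<in> Lset k R \<bb>" and "S \<subseteq> T"
  shows "\<aa> \<subseteq> \<bb>
    \<and> ((k = LeftLoc \<or> k = TwoSided) \<longrightarrow>
        (\<exists>\<phi>. \<phi> \<in> ring_hom (loc_ring R S) (loc_ring R T)
           \<and> (\<forall>r\<in>carrier R. \<phi> (loc_map R S r) = loc_map R T r)
           \<and> (\<forall>s\<in>S. \<forall>r\<in>carrier R.
                \<phi> (loc_inv R S s \<otimes>\<^bsub>loc_ring R S\<^esub> loc_map R S r)
                  = loc_inv R T s \<otimes>\<^bsub>loc_ring R T\<^esub> loc_map R T r)
           \<and> a_kernel (loc_ring R S) (loc_ring R T) \<phi>
                = {loc_inv R S s \<otimes>\<^bsub>loc_ring R S\<^esub> loc_map R S b | s b. s \<in> S \<and> b \<in> \<bb>}))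
    \<and> (k = RightLoc \<longrightarrow>
        (\<exists>\<phi>. \<phi> \<in> ring_hom (loc_ring R S) (loc_ring R T)
           \<and> (\<forall>r\<in>carrier R. \<phi> (loc_map R S r) = loc_map R T r)
           \<and> (\<forall>s\<in>S. \<forall>r\<in>carrier R.
                \<phi> (loc_map R S r \<otimes>\<^bsub>loc_ring R S\<^esub> loc_inv R S s)
                  = loc_map R T r \<otimes>\<^bsub>loc_ring R T\<^esub> loc_inv R T s)
           \<and> a_kernel (loc_ring R S) (loc_ring R T) \<phi>
                = {loc_map R S b \<otimes>\<^bsub>loc_ring R S\<^esub> loc_inv R S s | s b. s \<in> S \<and> b \<in> \<bb>}))"
proof -
  from assms(2,3) have S: "kind_localizable k R S" "ass R S = \<aa>"
    and T: "kind_localizable k R T" "ass R T = \<bb>"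
    by (auto simp: Lset_def)
  from T(1) have TR: "T \<subseteq> carrier R"
    by (cases k) (auto simp: kind_localizable_def left_localizable_def right_localizable_def
        multiplicative_set_def)
  note lift = assms(1) TR assms(4)
  have "\<aa> \<subseteq> \<bb>" using ass_mono[OF lift] S(2) T(2) by simp
  moreover have "left_localizable R S" if "k = LeftLoc \<or> k = TwoSided"
    using S(1) that by (auto simp: kind_localizable_def)
  moreover have "right_localizable R S" if "k = RightLoc"
    using S(1) that by (simp add: kind_localizable_def)
  ultimately show ?thesis
    using loc_lift_hom[OF lift] loc_lift_loc_map[OF lift]
      loc_lift_left_fraction[OF lift] loc_lift_kernel_left[OF lift]
      loc_lift_right_fraction[OF lift] loc_lift_kernel_right[OF lift]
    unfolding T(2) by (intro conjI impI exI[of _ "loc_lift R T"]) auto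
qed

end
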